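(* There exists $\varepsilon_0>0$ such that for every $\varepsilon\in(0,\varepsilon_0)$ the following holds. Let $\mathbf{U}$ be the $7\times 7$ matrix $$\mathbf{U}=\begin{pmatrix} 0 & -1 & \varepsilon & -10 & -\tfrac13+\varepsilon & -\tfrac13+\varepsilon & -\tfrac13+\varepsilon\\ \varepsilon & 0 & -1 & -10 & -\tfrac13+\varepsilon & -\tfrac13+\varepsilon & -\tfrac13+\varepsilon\\ -1 & \varepsilon & 0 & -10 & -\tfrac13+\varepsilon & -\tfrac13+\varepsilon & -\tfrac13+\varepsilon\\ -2 & -2 & 2 & 0 & -\tfrac13 & -\tfrac13 & -\tfrac13\\ -\tfrac13 & -\tfrac13 & -\tfrac13 & 10 & 0 & -1 & \varepsilon\\ -\tfrac13 & -\tfrac13 & -\tfrac13 & 10 & \varepsilon & 0 & -1\\ -\tfrac13 & -\tfrac13 & -\tfrac13 & 10 & -1 & \varepsilon & 0 \end{pmatrix}.$$ Then the set $\Gamma_{567}=\{\mathbf{x}\in S_7: x_5+x_6+x_7=1 \text{ and } x_5x_6x_7=0\}$ is asymptotically stable for the replicator dynamics $\dot x_i=x_i[(\mathbf{U}\mathbf{x})_i-\mathbf{x}\cdot\mathbf{U}\mathbf{x}]$, $i=1,\dots,7$, on $S_7$.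
   Context: $S_7=\{\mathbf{x}\in\mathbb{R}_+^7:\sum_i x_i=1\}$, which is invariant under the replicator dynamics. A compact invariant set is asymptotically stable if it is Lyapunov stable (every neighborhood contains a neighborhood whose forward orbits stay in the first) and attracting (all solutions starting in some neighborhood converge to it). The paper assumes throughout that $\varepsilon>0$ is "small enough". *)

theory Defs
  imports "HOL-Analysis.Analysis"
begin

text \<open>States are vectors in real^7; the coordinate i of type 7 corresponds to the
paper's index pidx i in {1..7}.\<close>

definition pidx :: "7 \<Rightarrow> nat" where
  "pidx i = nat (Rep_bit1 i) + 1"

definition Uentry :: "real \<Rightarrow> nat \<Rightarrow> nat \<Rightarrow> real" where
  "Uentry e k l =
    [[0, -1, e, -10, -1/3+e, -1/3+e, -1/3+e],
     [e, 0, -1, -10, -1/3+e, -1/3+e, -1/3+e],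
     [-1, e, 0, -10, -1/3+e, -1/3+e, -1/3+e],
     [-2, -2, 2, 0, -1/3, -1/3, -1/3],
     [-1/3, -1/3, -1/3, 10, 0, -1, e],
     [-1/3, -1/3, -1/3, 10, e, 0, -1],
     [-1/3, -1/3, -1/3, 10, -1, e, 0]] ! (k - 1) ! (l - 1)"

definition Umat :: "real \<Rightarrow> real^7^7" where
  "Umat e = (\<chi> i j. Uentry e (pidx i) (pidx j))"

definition coord :: "real^7 \<Rightarrow> nat \<Rightarrow> real" where
  "coord x k = x $ (THE i. pidx i = k)"

definition simplex7 :: "(real^7) set" where
  "simplex7 = {x. (\<forall>i. 0 \<le> x $ i) \<and> (\<Sum>i\<in>UNIV. x $ i) = 1}"

definition Gamma567 :: "(real^7) set" where
  "Gamma567 = {x \<in> simplex7. coord x 5 + coord x 6 + coord x 7 = 1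
                             \<and> coord x 5 * coord x 6 * coord x 7 = 0}"

definition replicator :: "real^7^7 \<Rightarrow> real^7 \<Rightarrow> real^7" where
  "replicator U x = (\<chi> i. x $ i * ((U *v x) $ i - x \<bullet> (U *v x)))"

definition is_solution :: "('a::real_normed_vector \<Rightarrow> 'a) \<Rightarrow> (real \<Rightarrow> 'a) \<Rightarrow> bool" where
  "is_solution F x \<longleftrightarrow>
     (\<forall>t\<ge>0. (x has_vector_derivative F (x t)) (at t within {0..}))"

definition asymptotically_stable ::
  "('a::real_normed_vector \<Rightarrow> 'a) \<Rightarrow> 'a set \<Rightarrow> 'a set \<Rightarrow> bool" where
  "asymptotically_stable F S G \<longleftrightarrow>
     compact G \<and> G \<subseteq> S \<and>
     (\<forall>x. is_solution F x \<and> x 0 \<in> G \<longrightarrow> (\<forall>t\<ge>0. x t \<in> G)) \<and>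
     (\<forall>V. open V \<and> G \<subseteq> V \<longrightarrow>
        (\<exists>W. open W \<and> G \<subseteq> W \<and>
           (\<forall>x. is_solution F x \<and> x 0 \<in> W \<inter> S \<longrightarrow> (\<forall>t\<ge>0. x t \<in> V)))) \<and>
     (\<exists>W. open W \<and> G \<subseteq> W \<and>
        (\<forall>x. is_solution F x \<and> x 0 \<in> W \<inter> S \<longrightarrow>
           ((\<lambda>t. infdist (x t) G) \<longlongrightarrow> 0) at_top))"

end

theory Submission
  imports Defs "HOL-Real_Asymp.Real_Asymp"
begin

text \<open>
  The function \<open>L x = x\<^sub>1 + x\<^sub>2 + x\<^sub>3 + x\<^sub>4 + x\<^sub>5 x\<^sub>6 x\<^sub>7\<close> is nonnegative on \<open>S\<^sub>7\<close> and
  vanishes exactly on \<open>\<Gamma>\<^sub>5\<^sub>6\<^sub>7\<close>. Where \<open>L < 10^-6\<close>, one of \<open>x\<^sub>5, x\<^sub>6, x\<^sub>7\<close> is below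
  \<open>1/100\<close>, so the pairwise products of \<open>x\<^sub>5, x\<^sub>6, x\<^sub>7\<close> sum to at most about \<open>1/4\<close> and the
  mean payoff is at least about \<open>-1/4\<close>; strategies 1--4 earn about \<open>-1/3\<close> and strategies
  5, 6, 7 together about \<open>-1\<close>. Hence every growth rate entering \<open>L\<close> is at most \<open>-1/40\<close>,
  so \<open>L\<close> decays like \<open>exp (-t/40)\<close> along solutions that start near \<open>\<Gamma>\<^sub>5\<^sub>6\<^sub>7\<close>, and
  Lyapunov's direct method applies on the compact invariant simplex.
\<close>

section \<open>Solutions and scalar differential inequalities\<close>

lemma is_solution_component_has_derivative:
  fixes F :: "real^'n \<Rightarrow> real^'n"
  assumes "is_solution F x" "0 \<le> t"
  shows "((\<lambda>t. x t $ i) has_real_derivative F (x t) $ i) (at t within {0..})"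
proof -
  have "(x has_vector_derivative F (x t)) (at t within {0..})"
    using assms unfolding is_solution_def by simp
  from bounded_linear.has_vector_derivative[OF bounded_linear_vec_nth this, of i]
  show ?thesis by (simp add: has_real_derivative_iff_has_vector_derivative)
qed

lemma is_solution_continuous_on:
  assumes "is_solution F x"
  shows "continuous_on {0..} x"
  unfolding continuous_on_eq_continuous_within
  using assms unfolding is_solution_def by (auto intro: has_vector_derivative_continuous)

lemma scalar_linear_ode_solution:
  fixes f a :: "real \<Rightarrow> real"
  assumes a: "continuous_on {0..} a"
    and f: "\<And>t. 0 \<le> t \<Longrightarrow> (f has_real_derivative a t * f t) (at t within {0..})"
    and t: "0 \<le> t"
  shows "f t = f 0 * exp (integral {0..t} a)"
proof -
  define A where "A u = integral {0..u} a" for u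
  define h where "h u = f u * exp (- A u)" for u
  have "(h has_real_derivative 0) (at u within {0..t})" if u: "u \<in> {0..t}" for u
  proof -
    have "(A has_real_derivative a u) (at u within {0..t})"
      unfolding A_def using u
      by (intro integral_has_real_derivative continuous_on_subset[OF a]) auto
    moreover have "(f has_real_derivative a u * f u) (at u within {0..t})"
      using f[of u] u by (auto intro: DERIV_subset)
    ultimately show ?thesis
      unfolding h_def by (auto intro!: derivative_eq_intros simp: algebra_simps)
  qed
  then have "h t = h 0"
    using has_field_derivative_zero_constant[of "{0..t}" h] t by fastforce
  then have "f t * exp (- A t) = f 0"
    unfolding h_def A_def by simp
  then show ?thesis
    unfolding A_def by (simp add: exp_minus field_simps)
qed

lemma first_crossing_time:
  fixes M :: "real \<Rightarrow> real"
  assumes "continuous_on {0..t} M" "0 \<le> t" "M 0 < b" "b \<le> M t"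
  obtains \<tau> where "0 < \<tau>" "\<tau> \<le> t" "b \<le> M \<tau>" "\<And>s. 0 \<le> s \<Longrightarrow> s < \<tau> \<Longrightarrow> M s < b"
proof -
  define A where "A = {s \<in> {0..t}. b \<le> M s}"
  have "closed A"
    unfolding A_def by (intro continuous_on_closed_Collect_le continuous_on_const assms(1)) auto
  moreover have "t \<in> A" "bdd_below A"
    using assms unfolding A_def by (auto intro: bdd_belowI[of _ 0])
  ultimately have "Inf A \<in> A"
    by (intro closed_contains_Inf) auto
  then have \<tau>: "0 \<le> Inf A" "Inf A \<le> t" "b \<le> M (Inf A)"
    unfolding A_def by auto
  have below: "M s < b" if "0 \<le> s" "s < Inf A" for s
  proof (rule ccontr)
    assume "\<not> M s < b"
    then have "s \<in> A"
      using that \<tau> unfolding A_def by auto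
    then have "Inf A \<le> s"
      using \<open>bdd_below A\<close> by (rule cInf_lower)
    then show False
      using that by simp
  qed
  have "0 < Inf A"
    using \<tau> assms(3) by (cases "Inf A = 0") auto
  with \<tau> below show ?thesis
    by (intro that) auto
qed

lemma nonincreasing_while_below:
  fixes M M' :: "real \<Rightarrow> real"
  assumes deriv: "\<And>t. 0 \<le> t \<Longrightarrow> (M has_real_derivative M' t) (at t within {0..})"
    and nonpos: "\<And>t. 0 \<le> t \<Longrightarrow> M t < d \<Longrightarrow> M' t \<le> 0"
    and M0: "M 0 < d" and t: "0 \<le> t"
  shows "M t \<le> M 0"
proof (rule ccontr)
  assume "\<not> M t \<le> M 0"
  define b where "b = min (M t) ((M 0 + d) / 2)"
  have b: "M 0 < b" "b < d" "b \<le> M t"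
    using \<open>\<not> M t \<le> M 0\<close> M0 unfolding b_def by (auto simp: min_less_iff_disj)
  have "continuous_on {0..} M"
    unfolding continuous_on_eq_continuous_within using deriv by (auto intro: DERIV_continuous)
  then have "continuous_on {0..t} M"
    by (rule continuous_on_subset) auto
  then obtain \<tau> where \<tau>: "0 < \<tau>" "\<tau> \<le> t" "b \<le> M \<tau>"
    and below: "\<And>s. 0 \<le> s \<Longrightarrow> s < \<tau> \<Longrightarrow> M s < b"
    using t b(1,3) by (rule first_crossing_time) blast
  have "\<exists>\<xi>\<in>{0<..<\<tau>}. M \<tau> - M 0 = M' \<xi> * (\<tau> - 0)"
  proof (rule mvt_simple[OF \<open>0 < \<tau>\<close>])
    fix u assume "0 \<le> u" "u \<le> \<tau>"
    then have "(M has_real_derivative M' u) (at u within {0..\<tau>})"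
      using deriv[of u] by (auto intro: DERIV_subset)
    then show "(M has_derivative (*) (M' u)) (at u within {0..\<tau>})"
      by (simp add: has_field_derivative_def)
  qed
  then obtain \<xi> where \<xi>: "0 < \<xi>" "\<xi> < \<tau>" "M \<tau> - M 0 = M' \<xi> * \<tau>"
    by auto
  have "M' \<xi> \<le> 0"
    using nonpos[of \<xi>] below[of \<xi>] \<xi> b by simp
  then have "M' \<xi> * \<tau> \<le> 0"
    using \<open>0 < \<tau>\<close> by (simp add: mult_nonpos_nonneg)
  then show False
    using \<xi> \<tau> b by simp
qed

lemma exponential_decay_while_below:
  fixes L L' :: "real \<Rightarrow> real"
  assumes deriv: "\<And>s. 0 \<le> s \<Longrightarrow> (L has_real_derivative L' s) (at s within {0..})"
    and decay: "\<And>s. 0 \<le> s \<Longrightarrow> L s < d \<Longrightarrow> L' s \<le> - c * L s"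
    and "0 \<le> c" "0 < d" "L 0 < d" "0 \<le> t"
  shows "L t \<le> L 0 * exp (- c * t)"
proof -
  define M where "M s = L s * exp (c * s)" for s
  have "M t \<le> M 0"
  proof (rule nonincreasing_while_below[where M' = "\<lambda>s. (L' s + c * L s) * exp (c * s)"])
    show "(M has_real_derivative (L' s + c * L s) * exp (c * s)) (at s within {0..})"
      if "0 \<le> s" for s
      unfolding M_def using deriv[OF that]
      by (auto intro!: derivative_eq_intros simp: algebra_simps)
    show "(L' s + c * L s) * exp (c * s) \<le> 0" if s: "0 \<le> s" and "M s < d" for s
    proof -
      have "L s \<le> M s \<or> L s \<le> 0"
        using s \<open>0 \<le> c\<close> unfolding M_def
        by (cases "L s \<le> 0") (auto intro: mult_le_cancel_left1[THEN iffD2])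
      then have "L s < d"
        using \<open>M s < d\<close> \<open>0 < d\<close> by auto
      then show ?thesis
        using decay[OF s] by (simp add: mult_nonpos_nonneg)
    qed
  qed (use assms in \<open>auto simp: M_def\<close>)
  then show ?thesis
    unfolding M_def by (simp add: exp_minus field_simps)
qed

section \<open>Replicator dynamics\<close>

definition growth_rate :: "real^'n^'n \<Rightarrow> real^'n \<Rightarrow> 'n \<Rightarrow> real" where
  "growth_rate U z i = (U *v z) $ i - z \<bullet> (U *v z)"

lemma continuous_on_matrix_vector_mult [continuous_intros]:
  fixes U :: "real^'n^'m"
  shows "continuous_on T x \<Longrightarrow> continuous_on T (\<lambda>t. U *v x t)"
  by (rule bounded_linear.continuous_on[OF matrix_vector_mul_bounded_linear])

lemma continuous_on_growth_rate [continuous_intros]: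
  "continuous_on T x \<Longrightarrow> continuous_on T (\<lambda>t. growth_rate U (x t) i)"
  unfolding growth_rate_def by (intro continuous_intros)

lemma replicator_solution_has_derivative:
  assumes "is_solution (replicator U) x" "0 \<le> t"
  shows "((\<lambda>t. x t $ i) has_real_derivative growth_rate U (x t) i * x t $ i) (at t within {0..})"
  using is_solution_component_has_derivative[OF assms, of i]
  by (simp add: replicator_def growth_rate_def mult.commute)

lemma replicator_solution_nonneg:
  assumes sol: "is_solution (replicator U) x" and "0 \<le> x 0 $ i" "0 \<le> t"
  shows "0 \<le> x t $ i"
proof -
  have "x t $ i = x 0 $ i * exp (integral {0..t} (\<lambda>s. growth_rate U (x s) i))"
    using is_solution_continuous_on[OF sol] replicator_solution_has_derivative[OF sol] \<open>0 \<le> t\<close>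
    by (intro scalar_linear_ode_solution[where f = "\<lambda>s. x s $ i"] continuous_intros)
  then show ?thesis
    using \<open>0 \<le> x 0 $ i\<close> by simp
qed

text \<open>The total mass minus one solves the scalar linear equation with coefficient minus
  the mean payoff.\<close>
lemma replicator_solution_sum:
  assumes sol: "is_solution (replicator U) x" and "(\<Sum>i\<in>UNIV. x 0 $ i) = 1" "0 \<le> t"
  shows "(\<Sum>i\<in>UNIV. x t $ i) = 1"
proof -
  define W where "W s = x s \<bullet> (U *v x s)" for s
  have "(\<Sum>i\<in>UNIV. x t $ i) - 1
      = ((\<Sum>i\<in>UNIV. x 0 $ i) - 1) * exp (integral {0..t} (\<lambda>s. - W s))"
  proof (rule scalar_linear_ode_solution[OF _ _ \<open>0 \<le> t\<close>])
    show "continuous_on {0..} (\<lambda>s. - W s)"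
      unfolding W_def using is_solution_continuous_on[OF sol] by (intro continuous_intros)
    fix s :: real assume "0 \<le> s"
    have "(\<Sum>i\<in>UNIV. (U *v x s) $ i * x s $ i) = W s"
      by (simp add: W_def inner_vec_def mult.commute)
    moreover have "(\<Sum>i\<in>UNIV. growth_rate U (x s) i * x s $ i)
        = (\<Sum>i\<in>UNIV. (U *v x s) $ i * x s $ i) - W s * (\<Sum>i\<in>UNIV. x s $ i)"
      by (simp add: growth_rate_def W_def[symmetric] left_diff_distrib sum_subtractf
          sum_distrib_left)
    ultimately have "(\<Sum>i\<in>UNIV. growth_rate U (x s) i * x s $ i)
        = - W s * ((\<Sum>i\<in>UNIV. x s $ i) - 1)"
      by (simp add: algebra_simps)
    then show "((\<lambda>s. (\<Sum>i\<in>UNIV. x s $ i) - 1) has_real_derivative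
        - W s * ((\<Sum>i\<in>UNIV. x s $ i) - 1)) (at s within {0..})"
      using replicator_solution_has_derivative[OF sol \<open>0 \<le> s\<close>]
      by (auto intro!: derivative_eq_intros)
  qed
  then show ?thesis
    using assms(2) by simp
qed

lemma replicator_solution_simplex7:
  assumes "is_solution (replicator U) x" "x 0 \<in> simplex7" "0 \<le> t"
  shows "x t \<in> simplex7"
  using assms replicator_solution_nonneg[OF assms(1)] replicator_solution_sum[OF assms(1)]
  unfolding simplex7_def by auto

lemma quadratic_form_ge_block:
  fixes U :: "real^'n^'n" and z :: "real^'n"
  assumes nonneg: "\<And>i. 0 \<le> z $ i"
    and bound: "\<And>i j. (i, j) \<notin> B \<times> B \<Longrightarrow> - m \<le> U $ i $ j"
  shows "(\<Sum>i\<in>B. \<Sum>j\<in>B. U $ i $ j * z $ i * z $ j)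
           - m * ((\<Sum>i\<in>UNIV. z $ i)\<^sup>2 - (\<Sum>i\<in>B. z $ i)\<^sup>2) \<le> z \<bullet> (U *v z)"
proof -
  define P where "P = (UNIV \<times> UNIV :: ('n \<times> 'n) set)"
  have "B \<times> B \<subseteq> P" "finite P"
    unfolding P_def by auto
  then have split: "(\<Sum>p\<in>P. f p) = (\<Sum>p\<in>P - B \<times> B. f p) + (\<Sum>p\<in>B \<times> B. f p)" for f
    by (rule sum.subset_diff)
  have quad: "z \<bullet> (U *v z) = (\<Sum>(i, j)\<in>P. U $ i $ j * z $ i * z $ j)"
    by (simp add: P_def inner_vec_def matrix_vector_mult_def sum_distrib_left
        sum.cartesian_product algebra_simps)
  have square: "(\<Sum>i\<in>A. z $ i)\<^sup>2 = (\<Sum>(i, j)\<in>A \<times> A. z $ i * z $ j)" for A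
    by (simp add: power2_eq_square sum_product sum.cartesian_product)
  have block: "(\<Sum>i\<in>B. \<Sum>j\<in>B. U $ i $ j * z $ i * z $ j)
      = (\<Sum>(i, j)\<in>B \<times> B. U $ i $ j * z $ i * z $ j)"
    by (rule sum.cartesian_product)
  have "- m * (z $ i * z $ j) \<le> U $ i $ j * z $ i * z $ j" if "(i, j) \<notin> B \<times> B" for i j
    using mult_right_mono[OF bound[OF that], of "z $ i * z $ j"] nonneg by (simp add: mult.assoc)
  then have "(\<Sum>(i, j)\<in>P - B \<times> B. - m * (z $ i * z $ j))
      \<le> (\<Sum>(i, j)\<in>P - B \<times> B. U $ i $ j * z $ i * z $ j)"
    by (intro sum_mono) auto
  then have "- m * (\<Sum>(i, j)\<in>P - B \<times> B. z $ i * z $ j)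
      \<le> (\<Sum>(i, j)\<in>P - B \<times> B. U $ i $ j * z $ i * z $ j)"
    by (simp add: sum_distrib_left case_prod_unfold)
  then show ?thesis
    unfolding quad block square[of UNIV, folded P_def] square[of B]
      split[of "\<lambda>(i, j). z $ i * z $ j"] split[of "\<lambda>(i, j). U $ i $ j * z $ i * z $ j"]
    by (simp only: add_diff_cancel)
qed

section \<open>Asymptotic stability from a Lyapunov function\<close>

lemma lyapunov_sublevel_subset:
  fixes L :: "'a::topological_space \<Rightarrow> real"
  assumes "compact S" "continuous_on UNIV L"
    and nonneg: "\<And>z. z \<in> S \<Longrightarrow> 0 \<le> L z"
    and "open V" "{z \<in> S. L z = 0} \<subseteq> V"
  shows "\<exists>d>0. \<forall>z\<in>S. L z < d \<longrightarrow> z \<in> V"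
proof (cases "S - V = {}")
  case True
  then show ?thesis
    by (intro exI[of _ 1]) auto
next
  case False
  have "compact (S - V)"
    using assms by (simp add: Diff_eq compact_Int_closed closed_Compl)
  then obtain z0 where z0: "z0 \<in> S - V" "\<And>z. z \<in> S - V \<Longrightarrow> L z0 \<le> L z"
    using continuous_attains_inf[OF _ False continuous_on_subset[OF assms(2)]] by auto
  then have "0 < L z0"
    using nonneg[of z0] assms(5) by force
  moreover have "z \<in> V" if "z \<in> S" "L z < L z0" for z
    using z0(2)[of z] that by force
  ultimately show ?thesis
    by blast
qed

locale exponential_lyapunov_function =
  fixes F :: "'a::real_normed_vector \<Rightarrow> 'a" and S :: "'a set" and L :: "'a \<Rightarrow> real"
    and c d :: real
  assumes compact_S: "compact S"
    and continuous_L: "continuous_on UNIV L"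
    and L_nonneg: "\<And>z. z \<in> S \<Longrightarrow> 0 \<le> L z"
    and S_invariant: "\<And>x t. is_solution F x \<Longrightarrow> x 0 \<in> S \<Longrightarrow> 0 \<le> t \<Longrightarrow> x t \<in> S"
    and L_decay: "\<And>x t. is_solution F x \<Longrightarrow> x 0 \<in> S \<Longrightarrow> L (x 0) < d \<Longrightarrow> 0 \<le> t
                    \<Longrightarrow> L (x t) \<le> L (x 0) * exp (- c * t)"
    and c_pos: "0 < c" and d_pos: "0 < d"
begin

abbreviation zero_set :: "'a set" where
  "zero_set \<equiv> {z \<in> S. L z = 0}"

lemma L_nonincreasing:
  assumes "is_solution F x" "x 0 \<in> S" "L (x 0) < d" "0 \<le> t"
  shows "L (x t) \<le> L (x 0)"
proof -
  have "L (x 0) * exp (- c * t) \<le> L (x 0)"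
    using L_nonneg[of "x 0"] assms c_pos by (simp add: mult_left_le)
  then show ?thesis
    using L_decay[OF assms] by simp
qed

lemma open_sublevel: "open {z. L z < r}"
  by (rule open_Collect_less[OF continuous_L continuous_on_const])

lemma zero_set_subset_sublevel: "0 < r \<Longrightarrow> zero_set \<subseteq> {z. L z < r}"
  by auto

lemma compact_zero_set: "compact zero_set"
proof -
  have "compact (S \<inter> {z. L z = 0})"
    using compact_S by (intro compact_Int_closed closed_Collect_eq continuous_L continuous_on_const)
  then show ?thesis
    by (simp add: Int_def)
qed

lemma zero_set_invariant:
  assumes "is_solution F x" "x 0 \<in> zero_set" "0 \<le> t"
  shows "x t \<in> zero_set"
proof -
  have "x t \<in> S" "L (x t) \<le> 0"
    using assms S_invariant[of x t] L_nonincreasing[of x t] d_pos by auto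
  then show ?thesis
    using L_nonneg[of "x t"] by auto
qed

lemma zero_set_stable:
  assumes "open V" "zero_set \<subseteq> V"
  shows "\<exists>W. open W \<and> zero_set \<subseteq> W \<and>
           (\<forall>x. is_solution F x \<and> x 0 \<in> W \<inter> S \<longrightarrow> (\<forall>t\<ge>0. x t \<in> V))"
proof -
  obtain r where r: "0 < r" "\<forall>z\<in>S. L z < r \<longrightarrow> z \<in> V"
    using lyapunov_sublevel_subset[OF compact_S continuous_L L_nonneg assms] by blast
  show ?thesis
  proof (intro exI[of _ "{z. L z < min r d}"] conjI allI impI open_sublevel zero_set_subset_sublevel)
    show "0 < min r d"
      using r(1) d_pos by simp
    fix x and t :: real
    assume "is_solution F x \<and> x 0 \<in> {z. L z < min r d} \<inter> S" "0 \<le> t"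
    then show "x t \<in> V"
      using S_invariant[of x t] L_nonincreasing[of x t] r(2) by auto
  qed
qed

lemma zero_set_attracting:
  assumes sol: "is_solution F x" and x0: "x 0 \<in> S" "L (x 0) < d"
  shows "((\<lambda>t. infdist (x t) zero_set) \<longlongrightarrow> 0) at_top"
proof (rule tendstoI)
  fix a :: real assume "0 < a"
  have "open {z. infdist z zero_set < a}"
    by (intro open_Collect_less continuous_intros)
  moreover have "zero_set \<subseteq> {z. infdist z zero_set < a}"
    using \<open>0 < a\<close> by (auto simp: infdist_zero)
  ultimately obtain r where r: "0 < r" "\<forall>z\<in>S. L z < r \<longrightarrow> z \<in> {z. infdist z zero_set < a}"
    using lyapunov_sublevel_subset[OF compact_S continuous_L L_nonneg] by blast
  have "((\<lambda>t. L (x 0) * exp (- c * t)) \<longlongrightarrow> 0) at_top"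
    using c_pos by real_asymp
  then have "\<forall>\<^sub>F t in at_top. L (x 0) * exp (- c * t) < r"
    using \<open>0 < r\<close> by (rule order_tendstoD)
  then show "\<forall>\<^sub>F t in at_top. dist (infdist (x t) zero_set) 0 < a"
    using eventually_ge_at_top[of 0]
  proof eventually_elim
    case (elim t)
    then have "L (x t) < r"
      using L_decay[OF sol x0] by fastforce
    then have "infdist (x t) zero_set < a"
      using r(2) S_invariant[OF sol x0(1) \<open>0 \<le> t\<close>] by simp
    then show ?case
      using infdist_nonneg[of "x t" zero_set] by simp
  qed
qed

theorem asymptotically_stable_zero_set: "asymptotically_stable F S zero_set"
  unfolding asymptotically_stable_def
proof (intro conjI allI impI)
  show "compact zero_set"
    by (rule compact_zero_set)
  show "zero_set \<subseteq> S"
    by auto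
  show "x t \<in> zero_set" if "is_solution F x \<and> x 0 \<in> zero_set" "0 \<le> t" for x t
    using that zero_set_invariant by blast
  show "\<exists>W. open W \<and> zero_set \<subseteq> W \<and>
          (\<forall>x. is_solution F x \<and> x 0 \<in> W \<inter> S \<longrightarrow> (\<forall>t\<ge>0. x t \<in> V))"
    if "open V \<and> zero_set \<subseteq> V" for V
    using that zero_set_stable by blast
  show "\<exists>W. open W \<and> zero_set \<subseteq> W \<and>
          (\<forall>x. is_solution F x \<and> x 0 \<in> W \<inter> S \<longrightarrow> ((\<lambda>t. infdist (x t) zero_set) \<longlongrightarrow> 0) at_top)"
    using zero_set_attracting d_pos
    by (intro exI[of _ "{z. L z < d}"] conjI allI impI open_sublevel zero_set_subset_sublevel) auto
qed

end

section \<open>The seven-strategy game\<close>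

text \<open>Index \<open>i :: 7\<close> is the paper's strategy \<open>i + 1\<close>.\<close>

lemma UNIV_7: "(UNIV :: 7 set) = {0, 1, 2, 3, 4, 5, 6}"
proof -
  have "i \<in> {0, 1, 2, 3, 4, 5, 6}" for i :: 7
  proof (induct i rule: bit1_induct)
    case (of_int z)
    then have "z \<in> {0, 1, 2, 3, 4, 5, 6}"
      by auto
    then show ?case
      by auto
  qed
  then show ?thesis
    by blast
qed

lemma sum_UNIV_7: "(\<Sum>i\<in>UNIV. f i) = f (0::7) + f 1 + f 2 + f 3 + f 4 + f 5 + f 6"
  unfolding UNIV_7 by (simp add: add.assoc)

lemma forall_7: "(\<forall>i::7. P i) \<longleftrightarrow> P 0 \<and> P 1 \<and> P 2 \<and> P 3 \<and> P 4 \<and> P 5 \<and> P 6"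
  by (metis UNIV_7 UNIV_I insertE empty_iff)

lemma pidx_numerals:
  "pidx 0 = 1" "pidx 1 = 2" "pidx 2 = 3" "pidx 3 = 4" "pidx 4 = 5" "pidx 5 = 6" "pidx 6 = 7"
  by (simp_all add: pidx_def bit1.Rep_numeral bit1.Rep_0 bit1.Rep_1)

lemma inj_pidx: "inj pidx"
  unfolding inj_def forall_7 by (simp add: pidx_numerals)

lemma coord_pidx: "coord z (pidx i) = z $ i"
  unfolding coord_def by (simp add: inj_eq[OF inj_pidx])

lemma Gamma567_coordinates:
  "Gamma567 = {z \<in> simplex7. z $ 4 + z $ 5 + z $ 6 = 1 \<and> z $ 4 * z $ 5 * z $ 6 = 0}"
  using coord_pidx[of _ 4] coord_pidx[of _ 5] coord_pidx[of _ 6]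
  unfolding Gamma567_def pidx_numerals by simp

lemma simplex7_iff:
  "z \<in> simplex7 \<longleftrightarrow> (\<forall>i. 0 \<le> z $ i) \<and> z $ 0 + z $ 1 + z $ 2 + z $ 3 + z $ 4 + z $ 5 + z $ 6 = 1"
  by (simp add: simplex7_def sum_UNIV_7)

lemma compact_simplex7: "compact simplex7"
proof -
  have "closed simplex7"
  proof -
    have "simplex7 = (\<Inter>i. {z. 0 \<le> z $ i}) \<inter> {z. (\<Sum>i\<in>UNIV. z $ i) = 1}"
      unfolding simplex7_def by auto
    also have "closed \<dots>"
      by (intro closed_Int closed_INT ballI closed_Collect_le closed_Collect_eq continuous_intros)
    finally show ?thesis .
  qed
  moreover have "norm z \<le> 1" if "z \<in> simplex7" for z
  proof -
    have "norm z \<le> (\<Sum>i\<in>UNIV. \<bar>z $ i\<bar>)"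
      by (rule norm_le_l1_cart)
    also have "\<dots> = 1"
      using that by (simp add: simplex7_def)
    finally show ?thesis .
  qed
  ultimately show ?thesis
    by (auto simp: compact_eq_bounded_closed bounded_iff)
qed

lemma Umat_mult_vector:
  "(Umat e *v z) $ 0 = - z $ 1 + e * z $ 2 - 10 * z $ 3 + (e - 1/3) * (z $ 4 + z $ 5 + z $ 6)"
  "(Umat e *v z) $ 1 = e * z $ 0 - z $ 2 - 10 * z $ 3 + (e - 1/3) * (z $ 4 + z $ 5 + z $ 6)"
  "(Umat e *v z) $ 2 = - z $ 0 + e * z $ 1 - 10 * z $ 3 + (e - 1/3) * (z $ 4 + z $ 5 + z $ 6)"
  "(Umat e *v z) $ 3 = - 2 * z $ 0 - 2 * z $ 1 + 2 * z $ 2 - (z $ 4 + z $ 5 + z $ 6) / 3"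
  "(Umat e *v z) $ 4 = 10 * z $ 3 - (z $ 0 + z $ 1 + z $ 2) / 3 - z $ 5 + e * z $ 6"
  "(Umat e *v z) $ 5 = 10 * z $ 3 - (z $ 0 + z $ 1 + z $ 2) / 3 + e * z $ 4 - z $ 6"
  "(Umat e *v z) $ 6 = 10 * z $ 3 - (z $ 0 + z $ 1 + z $ 2) / 3 - z $ 4 + e * z $ 5"
  by (simp_all add: matrix_vector_mult_def Umat_def Uentry_def sum_UNIV_7 pidx_numerals algebra_simps)

lemma Umat_ge:
  assumes "0 \<le> e"
  shows "- 10 \<le> Umat e $ i $ j"
proof -
  have "\<forall>i j. - 10 \<le> Umat e $ i $ j"
    using assms unfolding forall_7 by (simp add: Umat_def Uentry_def pidx_numerals)
  then show ?thesis
    by blast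
qed

lemma Umat_block_567:
  "(\<Sum>i\<in>{4, 5, 6}. \<Sum>j\<in>{4, 5, 6}. Umat e $ i $ j * z $ i * z $ j)
     = (e - 1) * (z $ 4 * z $ 5 + z $ 5 * z $ 6 + z $ 6 * z $ 4)"
  by (simp add: Umat_def Uentry_def pidx_numerals algebra_simps)

lemma product_le_quarter:
  fixes a b :: real
  assumes "0 \<le> a" "0 \<le> b" "a + b \<le> 1"
  shows "a * b \<le> 1/4"
proof -
  have "(a + b)\<^sup>2 \<le> 1"
    using assms by (simp add: power_le_one)
  moreover have "0 \<le> (a - b)\<^sup>2"
    by simp
  ultimately show ?thesis
    by (simp add: power2_eq_square algebra_simps)
qed

lemma pairwise_products_le_of_small:
  fixes p q r \<delta> :: real
  assumes "0 \<le> p" "0 \<le> q" "0 \<le> r" "p + q + r \<le> 1" "p \<le> \<delta>"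
  shows "p * q + q * r + r * p \<le> 1/4 + \<delta>"
proof -
  have "q * r \<le> 1/4"
    using assms by (intro product_le_quarter) auto
  moreover have "p * (q + r) \<le> p"
    using assms by (intro mult_left_le) auto
  ultimately show ?thesis
    using assms by (simp add: algebra_simps)
qed

lemma pairwise_products_le_of_small_product:
  fixes p q r \<delta> :: real
  assumes "0 \<le> p" "0 \<le> q" "0 \<le> r" "p + q + r \<le> 1" "0 \<le> \<delta>" "p * q * r < \<delta> ^ 3"
  shows "p * q + q * r + r * p \<le> 1/4 + \<delta>"
proof -
  have "p < \<delta> \<or> q < \<delta> \<or> r < \<delta>"
  proof (rule ccontr)
    assume "\<not> ?thesis"
    then have "\<delta> * \<delta> * \<delta> \<le> p * q * r"
      using assms by (intro mult_mono) auto
    then show False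
      using assms(6) by (simp add: power3_eq_cube)
  qed
  then show ?thesis
    using pairwise_products_le_of_small[of p q r \<delta>] pairwise_products_le_of_small[of q r p \<delta>]
      pairwise_products_le_of_small[of r p q \<delta>] assms
    by linarith
qed

lemma mean_payoff_lower_bound:
  assumes "0 \<le> e" "z \<in> simplex7"
  shows "- (z $ 4 * z $ 5 + z $ 5 * z $ 6 + z $ 6 * z $ 4) - 20 * (z $ 0 + z $ 1 + z $ 2 + z $ 3)
           \<le> z \<bullet> (Umat e *v z)"
proof -
  define y where "y = z $ 0 + z $ 1 + z $ 2 + z $ 3"
  define \<sigma> where "\<sigma> = z $ 4 * z $ 5 + z $ 5 * z $ 6 + z $ 6 * z $ 4"
  have nonneg: "\<And>i. 0 \<le> z $ i" and total: "(\<Sum>i\<in>UNIV. z $ i) = 1"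
    using assms(2) by (auto simp: simplex7_def)
  have block_mass: "(\<Sum>i\<in>{4, 5, 6}. z $ i) = 1 - y"
    using total unfolding sum_UNIV_7 y_def by simp
  have "(e - 1) * \<sigma> - 10 * (1 - (1 - y)\<^sup>2) \<le> z \<bullet> (Umat e *v z)"
    using quadratic_form_ge_block[where B = "{4, 5, 6}", OF nonneg Umat_ge[OF assms(1)]]
    unfolding Umat_block_567 total block_mass \<sigma>_def by simp
  moreover have "(e - 1) * \<sigma> - 10 * (1 - (1 - y)\<^sup>2) = e * \<sigma> - \<sigma> - 20 * y + 10 * (y * y)"
    by (simp add: power2_eq_square algebra_simps)
  moreover have "0 \<le> e * \<sigma>" "0 \<le> y * y"
    using assms(1) nonneg unfolding \<sigma>_def by simp_all
  ultimately show ?thesis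
    unfolding \<sigma>_def y_def by linarith
qed

definition lyapunov567 :: "real^7 \<Rightarrow> real" where
  "lyapunov567 z = z $ 0 + z $ 1 + z $ 2 + z $ 3 + z $ 4 * z $ 5 * z $ 6"

definition lyapunov567_derivative :: "real^7^7 \<Rightarrow> real^7 \<Rightarrow> real" where
  "lyapunov567_derivative U z =
     growth_rate U z 0 * z $ 0 + growth_rate U z 1 * z $ 1 + growth_rate U z 2 * z $ 2
     + growth_rate U z 3 * z $ 3
     + (growth_rate U z 4 + growth_rate U z 5 + growth_rate U z 6) * (z $ 4 * z $ 5 * z $ 6)"

lemma lyapunov567_nonneg: "z \<in> simplex7 \<Longrightarrow> 0 \<le> lyapunov567 z"
  by (simp add: simplex7_iff lyapunov567_def)

lemma continuous_on_lyapunov567: "continuous_on UNIV lyapunov567"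
  unfolding lyapunov567_def by (intro continuous_intros)

lemma Gamma567_eq_lyapunov567_zero: "Gamma567 = {z \<in> simplex7. lyapunov567 z = 0}"
proof -
  have "z $ 4 + z $ 5 + z $ 6 = 1 \<and> z $ 4 * z $ 5 * z $ 6 = 0 \<longleftrightarrow> lyapunov567 z = 0"
    if "z \<in> simplex7" for z
  proof -
    have "\<forall>i. 0 \<le> z $ i" "z $ 0 + z $ 1 + z $ 2 + z $ 3 + z $ 4 + z $ 5 + z $ 6 = 1"
      using that by (simp_all add: simplex7_iff)
    moreover have "0 \<le> z $ 4 * z $ 5 * z $ 6"
      using calculation by simp
    ultimately show ?thesis
      unfolding lyapunov567_def by (smt (verit))
  qed
  then show ?thesis
    unfolding Gamma567_coordinates by blast
qed

lemma lyapunov567_has_derivative: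
  assumes "is_solution (replicator U) x" "0 \<le> t"
  shows "((\<lambda>t. lyapunov567 (x t)) has_real_derivative lyapunov567_derivative U (x t)) (at t within {0..})"
  unfolding lyapunov567_def lyapunov567_derivative_def
  using replicator_solution_has_derivative[OF assms]
  by (auto intro!: derivative_eq_intros simp: algebra_simps)

lemma mean_payoff_near_Gamma567:
  assumes "0 \<le> e" and z: "z \<in> simplex7" and small: "lyapunov567 z < 1/1000000"
  shows "- 1/4 - 1/100 - 20 * (z $ 0 + z $ 1 + z $ 2 + z $ 3) \<le> z \<bullet> (Umat e *v z)"
proof -
  have nonneg: "\<And>i. 0 \<le> z $ i" and total: "z $ 0 + z $ 1 + z $ 2 + z $ 3 + z $ 4 + z $ 5 + z $ 6 = 1"
    using z by (simp_all add: simplex7_iff)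
  have "0 \<le> z $ 0 + z $ 1 + z $ 2 + z $ 3" "0 \<le> z $ 4 * z $ 5 * z $ 6"
    using nonneg by simp_all
  then have "z $ 4 * z $ 5 * z $ 6 < (1/100) ^ 3" "z $ 4 + z $ 5 + z $ 6 \<le> 1"
    using small total unfolding lyapunov567_def by (simp_all add: power3_eq_cube)
  then have "z $ 4 * z $ 5 + z $ 5 * z $ 6 + z $ 6 * z $ 4 \<le> 1/4 + 1/100"
    using nonneg by (intro pairwise_products_le_of_small_product) auto
  then show ?thesis
    using mean_payoff_lower_bound[OF assms(1) z] by linarith
qed

lemma growth_rates_near_Gamma567:
  assumes e: "0 \<le> e" "e < 1/100" and z: "z \<in> simplex7" and small: "lyapunov567 z < 1/1000000"
  shows "\<forall>i\<in>{0, 1, 2, 3}. growth_rate (Umat e) z i \<le> - 1/40"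
    and "growth_rate (Umat e) z 4 + growth_rate (Umat e) z 5 + growth_rate (Umat e) z 6 \<le> - 1/40"
proof -
  define y where "y = z $ 0 + z $ 1 + z $ 2 + z $ 3"
  define s where "s = z $ 4 + z $ 5 + z $ 6"
  define W where "W = z \<bullet> (Umat e *v z)"
  have nonneg: "\<And>i. 0 \<le> z $ i" and "y + s = 1"
    using z unfolding simplex7_iff y_def s_def by auto
  have "0 \<le> z $ 4 * z $ 5 * z $ 6" "0 \<le> y"
    using nonneg unfolding y_def by simp_all
  then have "y < 1/1000000" "s \<le> 1"
    using small \<open>y + s = 1\<close> unfolding lyapunov567_def y_def by linarith+
  have W: "- 1/4 - 1/100 - 20 * y \<le> W"
    using mean_payoff_near_Gamma567[OF e(1) z small] unfolding W_def y_def .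
  have small_terms: "e * z $ 0 \<le> z $ 0" "e * z $ 1 \<le> z $ 1" "e * z $ 2 \<le> z $ 2" "e * s \<le> e"
    using e nonneg \<open>s \<le> 1\<close> by (simp_all add: mult_left_le_one_le mult_left_le)
  have rates: "growth_rate (Umat e) z 0 = - z $ 1 + e * z $ 2 - 10 * z $ 3 + e * s - s / 3 - W"
    "growth_rate (Umat e) z 1 = e * z $ 0 - z $ 2 - 10 * z $ 3 + e * s - s / 3 - W"
    "growth_rate (Umat e) z 2 = - z $ 0 + e * z $ 1 - 10 * z $ 3 + e * s - s / 3 - W"
    "growth_rate (Umat e) z 3 = - 2 * z $ 0 - 2 * z $ 1 + 2 * z $ 2 - s / 3 - W"
    "growth_rate (Umat e) z 4 + growth_rate (Umat e) z 5 + growth_rate (Umat e) z 6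
       = 30 * z $ 3 - (z $ 0 + z $ 1 + z $ 2) + e * s - s - 3 * W"
    unfolding growth_rate_def Umat_mult_vector s_def W_def by (simp_all add: algebra_simps)
  note bounds = small_terms W e \<open>y + s = 1\<close> \<open>y < 1/1000000\<close> y_def
    nonneg[of 0] nonneg[of 1] nonneg[of 2] nonneg[of 3]
  have "growth_rate (Umat e) z 0 \<le> - 1/40" "growth_rate (Umat e) z 1 \<le> - 1/40"
    "growth_rate (Umat e) z 2 \<le> - 1/40" "growth_rate (Umat e) z 3 \<le> - 1/40"
    using rates bounds by linarith+
  then show "\<forall>i\<in>{0, 1, 2, 3}. growth_rate (Umat e) z i \<le> - 1/40"
    by simp
  show "growth_rate (Umat e) z 4 + growth_rate (Umat e) z 5 + growth_rate (Umat e) z 6 \<le> - 1/40"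
    using rates bounds by linarith
qed

lemma lyapunov567_derivative_le:
  assumes "0 \<le> e" "e < 1/100" "z \<in> simplex7" "lyapunov567 z < 1/1000000"
  shows "lyapunov567_derivative (Umat e) z \<le> - (1/40) * lyapunov567 z"
proof -
  note rates = growth_rates_near_Gamma567[OF assms]
  have nonneg: "0 \<le> z $ i" for i
    using assms(3) by (simp add: simplex7_iff)
  have "growth_rate (Umat e) z i * z $ i \<le> - (1/40) * z $ i" if "i \<in> {0, 1, 2, 3}" for i
    using rates(1) that nonneg[of i] by (intro mult_right_mono) auto
  then have "growth_rate (Umat e) z 0 * z $ 0 \<le> - (1/40) * z $ 0"
    "growth_rate (Umat e) z 1 * z $ 1 \<le> - (1/40) * z $ 1"
    "growth_rate (Umat e) z 2 * z $ 2 \<le> - (1/40) * z $ 2"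
    "growth_rate (Umat e) z 3 * z $ 3 \<le> - (1/40) * z $ 3"
    by simp_all
  moreover have "(growth_rate (Umat e) z 4 + growth_rate (Umat e) z 5 + growth_rate (Umat e) z 6)
      * (z $ 4 * z $ 5 * z $ 6) \<le> - (1/40) * (z $ 4 * z $ 5 * z $ 6)"
    using rates(2) nonneg by (intro mult_right_mono) auto
  ultimately show ?thesis
    unfolding lyapunov567_derivative_def lyapunov567_def distrib_left by linarith
qed

lemma lyapunov567_exponential_decay:
  assumes "0 \<le> e" "e < 1/100" and sol: "is_solution (replicator (Umat e)) x"
    and "x 0 \<in> simplex7" "lyapunov567 (x 0) < 1/1000000" "0 \<le> t"
  shows "lyapunov567 (x t) \<le> lyapunov567 (x 0) * exp (- (1/40) * t)"
proof (rule exponential_decay_while_below[OF lyapunov567_has_derivative[OF sol]])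
  show "lyapunov567_derivative (Umat e) (x s) \<le> - (1/40) * lyapunov567 (x s)"
    if "0 \<le> s" "lyapunov567 (x s) < 1/1000000" for s
    using that assms replicator_solution_simplex7[OF sol] by (intro lyapunov567_derivative_le) auto
qed (use assms in auto)

theorem proposition8:
  shows "\<exists>e0>0. \<forall>e. 0 < e \<and> e < e0 \<longrightarrow>
           asymptotically_stable (replicator (Umat e)) simplex7 Gamma567"
proof (intro exI[of _ "1/100"] conjI allI impI)
  fix e :: real
  assume e: "0 < e \<and> e < 1/100"
  interpret exponential_lyapunov_function "replicator (Umat e)" simplex7 lyapunov567 "1/40" "1/1000000"
  proof
    show "compact simplex7"
      by (rule compact_simplex7)
    show "continuous_on UNIV lyapunov567"
      by (rule continuous_on_lyapunov567)
    show "0 \<le> lyapunov567 z" if "z \<in> simplex7" for z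
      using that by (rule lyapunov567_nonneg)
    show "x t \<in> simplex7"
      if "is_solution (replicator (Umat e)) x" "x 0 \<in> simplex7" "0 \<le> t" for x t
      using that by (rule replicator_solution_simplex7)
    show "lyapunov567 (x t) \<le> lyapunov567 (x 0) * exp (- (1/40) * t)"
      if "is_solution (replicator (Umat e)) x" "x 0 \<in> simplex7" "lyapunov567 (x 0) < 1/1000000"
        "0 \<le> t" for x t
      using e that by (intro lyapunov567_exponential_decay) auto
  qed simp_all
  show "asymptotically_stable (replicator (Umat e)) simplex7 Gamma567"
    unfolding Gamma567_eq_lyapunov567_zero by (rule asymptotically_stable_zero_set)
qed simp

end
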